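(* Let $G$ be a finite simple graph with vertices $v_1,\dots,v_n$ ($n\ge 1$) in which no vertex is adjacent to all other vertices, let $d\ge 1$ be an integer, let $G'$ be the graph constructed from $(G,d)$ as described in the context, and let $h=n(n+1)+d$. Then $G$ has domatic number at least $d$ if and only if $G'$ has Hadwiger number at least $h$.
   Context: A dominating set of $G$ is a set $D$ of vertices such that every vertex of $G$ either lies in $D$ or is adjacent to a vertex of $D$. The domatic number of $G$ is the maximum number of pairwise disjoint dominating sets of $G$. The Hadwiger number of a graph is the largest $h$ such that there exist $h$ pairwise disjoint vertex sets, each inducing a connected subgraph, with an edge between every two of them (equivalently, the largest $h$ such that $K_h$ is a minor). Construction of $G'$ from a graph $G$ with vertices $v_1,\dots,v_n$ and an integer $d$: say $v_i$ dominates $v_j$ if $v_i=v_j$ or $v_iv_j$ is an edge of $G$. The vertex set of $G'$ consists of top vertices $t_1,\dots,t_d$, middle vertices $m_1,\dots,m_n$, and bottom vertices $b_{j,k}$ for $1\le j\le n$, $1\le k\le n+1$. Edges: the top vertices form a clique; the middle vertices form an independent set; the bottom vertices form a clique (of size $n(n+1)$); every top vertex is adjacent to every middle vertex; there are no top–bottom edges; middle vertex $m_i$ is adjacent to bottom vertex $b_{j,k}$ if and only if $v_i$ dominates $v_j$ in $G$. *)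

theory Defs
  imports Main
begin

text \<open>A finite simple graph is given by a finite vertex set V and a symmetric,
irreflexive adjacency relation E (only its restriction to V matters).\<close>

definition simple_graph :: "'a set \<Rightarrow> ('a \<Rightarrow> 'a \<Rightarrow> bool) \<Rightarrow> bool" where
  "simple_graph V E \<longleftrightarrow> finite V \<and> (\<forall>u v. E u v \<longrightarrow> E v u) \<and> (\<forall>v. \<not> E v v)"

definition dominating_set :: "'a set \<Rightarrow> ('a \<Rightarrow> 'a \<Rightarrow> bool) \<Rightarrow> 'a set \<Rightarrow> bool" where
  "dominating_set V E D \<longleftrightarrow> D \<subseteq> V \<and> (\<forall>v\<in>V. v \<in> D \<or> (\<exists>u\<in>D. E u v))"

definition domatic_number :: "'a set \<Rightarrow> ('a \<Rightarrow> 'a \<Rightarrow> bool) \<Rightarrow> nat" where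
  "domatic_number V E = Sup {k. \<exists>D :: nat \<Rightarrow> 'a set.
      (\<forall>i<k. dominating_set V E (D i)) \<and>
      (\<forall>i<k. \<forall>j<k. i \<noteq> j \<longrightarrow> D i \<inter> D j = {})}"

definition induces_connected :: "('a \<Rightarrow> 'a \<Rightarrow> bool) \<Rightarrow> 'a set \<Rightarrow> bool" where
  "induces_connected E S \<longleftrightarrow> S \<noteq> {} \<and>
     (\<forall>u\<in>S. \<forall>v\<in>S. (\<lambda>x y. x \<in> S \<and> y \<in> S \<and> E x y)\<^sup>*\<^sup>* u v)"

definition hadwiger_number :: "'a set \<Rightarrow> ('a \<Rightarrow> 'a \<Rightarrow> bool) \<Rightarrow> nat" where
  "hadwiger_number V E = Sup {h. \<exists>B :: nat \<Rightarrow> 'a set.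
      (\<forall>i<h. B i \<subseteq> V \<and> induces_connected E (B i)) \<and>
      (\<forall>i<h. \<forall>j<h. i \<noteq> j \<longrightarrow> B i \<inter> B j = {}) \<and>
      (\<forall>i<h. \<forall>j<h. i \<noteq> j \<longrightarrow> (\<exists>x\<in>B i. \<exists>y\<in>B j. E x y))}"

text \<open>Construction of G' from G (vertices 0..<n) and d, with 0-based indices:
t_1..t_d = Top 0..Top (d-1); m_1..m_n = Mid 0..Mid (n-1);
b_{j,k} = Bot j k with j < n, k < n+1.\<close>
datatype vtx = Top nat | Mid nat | Bot nat nat

definition dominates :: "(nat \<Rightarrow> nat \<Rightarrow> bool) \<Rightarrow> nat \<Rightarrow> nat \<Rightarrow> bool" where
  "dominates E i j \<longleftrightarrow> i = j \<or> E i j"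

definition G'_verts :: "nat \<Rightarrow> nat \<Rightarrow> vtx set" where
  "G'_verts n d = {Top k | k. k < d} \<union> {Mid i | i. i < n} \<union>
                  {Bot j k | j k. j < n \<and> k < n + 1}"

fun G'_edge :: "(nat \<Rightarrow> nat \<Rightarrow> bool) \<Rightarrow> vtx \<Rightarrow> vtx \<Rightarrow> bool" where
  "G'_edge E (Top a) (Top b) = (a \<noteq> b)"
| "G'_edge E (Top a) (Mid i) = True"
| "G'_edge E (Mid i) (Top a) = True"
| "G'_edge E (Top a) (Bot j k) = False"
| "G'_edge E (Bot j k) (Top a) = False"
| "G'_edge E (Mid i) (Mid i') = False"
| "G'_edge E (Bot j k) (Bot j' k') = ((j, k) \<noteq> (j', k'))"
| "G'_edge E (Mid i) (Bot j k) = dominates E i j"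
| "G'_edge E (Bot j k) (Mid i) = dominates E i j"

end

theory Submission
  imports Defs
begin

text \<open>If \<open>D\<^sub>1, \<dots>, D\<^sub>d\<close> are disjoint dominating sets of \<open>G\<close>, the stars
\<open>{t\<^sub>a} \<union> {m\<^sub>i | v\<^sub>i \<in> D\<^sub>a}\<close> together with the \<open>n(n+1)\<close> bottom singletons are the branch sets
of a \<open>K\<^sub>h\<close> minor: the top vertices form a clique, and a vertex of \<open>D\<^sub>a\<close> dominating \<open>v\<^sub>j\<close>
joins the \<open>a\<close>-th star to every \<open>b\<^sub>j\<^sub>,\<^sub>k\<close>.
Conversely, in a \<open>K\<^sub>h\<close> minor model at most \<open>n(n+1)\<close> branch sets meet the bottom clique,
so at least \<open>d\<close> avoid it. Such a branch set \<open>B\<close> contains, for every \<open>j\<close>, a middle vertex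
dominating \<open>v\<^sub>j\<close>: otherwise no branch set can touch \<open>B\<close> through the column
\<open>b\<^sub>j\<^sub>,\<^sub>1, \<dots>, b\<^sub>j\<^sub>,\<^sub>n\<^sub>+\<^sub>1\<close>, so all \<open>h\<close> disjoint branch sets meet the complement of that
column, which has only \<open>h - 1\<close> vertices. The middle vertices of \<open>d\<close> such branch sets
are \<open>d\<close> disjoint dominating sets.\<close>

lemma card_le_if_disjoint_family_meets:
  assumes "finite S"
    and meets: "\<And>i. i \<in> J \<Longrightarrow> B i \<inter> S \<noteq> {}"
    and disjoint: "\<And>i j. i \<in> J \<Longrightarrow> j \<in> J \<Longrightarrow> i \<noteq> j \<Longrightarrow> B i \<inter> B j = {}"
  shows "card J \<le> card S"
proof -
  define f where "f i = (SOME v. v \<in> B i \<inter> S)" for i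
  have f: "f i \<in> B i \<inter> S" if "i \<in> J" for i
    using meets[OF that] unfolding f_def by (metis some_in_eq)
  have "inj_on f J"
    using f disjoint by (intro inj_onI) (metis IntD1 disjoint_iff)
  moreover have "f ` J \<subseteq> S" using f by blast
  ultimately show ?thesis using card_inj_on_le assms(1) by blast
qed

lemma nat_le_Sup_iff_mem:
  fixes K :: "nat set"
  assumes "finite K" "K \<noteq> {}" and down_closed: "\<And>k k'. k \<in> K \<Longrightarrow> k' \<le> k \<Longrightarrow> k' \<in> K"
  shows "d \<le> Sup K \<longleftrightarrow> d \<in> K"
proof -
  have "Sup K = Max K" using assms(1,2) by (rule cSup_eq_Max)
  moreover have "d \<le> Max K \<longleftrightarrow> d \<in> K"
    using assms(1,2) down_closed[OF Max_in[OF assms(1,2)]] Max_ge[OF assms(1)] by blast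
  ultimately show ?thesis by simp
qed

definition disjoint_dominating_sets ::
    "'a set \<Rightarrow> ('a \<Rightarrow> 'a \<Rightarrow> bool) \<Rightarrow> nat \<Rightarrow> (nat \<Rightarrow> 'a set) \<Rightarrow> bool" where
  "disjoint_dominating_sets V E k D \<longleftrightarrow>
     (\<forall>i<k. dominating_set V E (D i)) \<and> (\<forall>i<k. \<forall>j<k. i \<noteq> j \<longrightarrow> D i \<inter> D j = {})"

definition clique_minor_model ::
    "'a set \<Rightarrow> ('a \<Rightarrow> 'a \<Rightarrow> bool) \<Rightarrow> nat \<Rightarrow> (nat \<Rightarrow> 'a set) \<Rightarrow> bool" where
  "clique_minor_model V E h B \<longleftrightarrow>
     (\<forall>i<h. B i \<subseteq> V \<and> induces_connected E (B i)) \<and>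
     (\<forall>i<h. \<forall>j<h. i \<noteq> j \<longrightarrow> B i \<inter> B j = {}) \<and>
     (\<forall>i<h. \<forall>j<h. i \<noteq> j \<longrightarrow> (\<exists>x\<in>B i. \<exists>y\<in>B j. E x y))"

lemma disjoint_dominating_sets_mono:
  "disjoint_dominating_sets V E k D \<Longrightarrow> k' \<le> k \<Longrightarrow> disjoint_dominating_sets V E k' D"
  by (simp add: disjoint_dominating_sets_def)

lemma clique_minor_model_mono:
  "clique_minor_model V E h B \<Longrightarrow> h' \<le> h \<Longrightarrow> clique_minor_model V E h' B"
  by (simp add: clique_minor_model_def)

lemma clique_minor_model_card_le:
  assumes model: "clique_minor_model V E h B" and "finite S"
    and meets: "\<And>i. i < h \<Longrightarrow> B i \<inter> S \<noteq> {}"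
  shows "h \<le> card S"
proof -
  have "card {..<h} \<le> card S"
  proof (rule card_le_if_disjoint_family_meets[OF \<open>finite S\<close>])
    show "B i \<inter> B j = {}" if "i \<in> {..<h}" "j \<in> {..<h}" "i \<noteq> j" for i j
      using model that unfolding clique_minor_model_def by blast
  qed (use meets in simp)
  then show ?thesis by simp
qed

lemma domatic_number_ge_iff:
  assumes "finite V" "V \<noteq> {}"
  shows "d \<le> domatic_number V E \<longleftrightarrow> (\<exists>D. disjoint_dominating_sets V E d D)"
proof -
  let ?K = "{k. \<exists>D. disjoint_dominating_sets V E k D}"
  have bounded: "k \<le> card V" if k: "k \<in> ?K" for k
  proof -
    obtain D where D: "disjoint_dominating_sets V E k D" using k by blast
    have "card {..<k} \<le> card V"
    proof (rule card_le_if_disjoint_family_meets[OF assms(1)])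
      fix i assume "i \<in> {..<k}"
      then have "dominating_set V E (D i)" using D by (simp add: disjoint_dominating_sets_def)
      then show "D i \<inter> V \<noteq> {}" using assms(2) unfolding dominating_set_def by blast
    qed (use D in \<open>auto simp: disjoint_dominating_sets_def\<close>)
    then show ?thesis by simp
  qed
  have "finite ?K" using bounded finite_nat_set_iff_bounded_le by blast
  moreover have "0 \<in> ?K" by (simp add: disjoint_dominating_sets_def)
  moreover have "k' \<in> ?K" if "k \<in> ?K" "k' \<le> k" for k k'
    using that disjoint_dominating_sets_mono by blast
  ultimately have "d \<le> Sup ?K \<longleftrightarrow> d \<in> ?K"
    by (intro nat_le_Sup_iff_mem) blast+
  moreover have "domatic_number V E = Sup ?K"
    by (simp add: domatic_number_def disjoint_dominating_sets_def)
  ultimately show ?thesis by simp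
qed

lemma hadwiger_number_ge_iff:
  assumes "finite V"
  shows "h \<le> hadwiger_number V E \<longleftrightarrow> (\<exists>B. clique_minor_model V E h B)"
proof -
  let ?K = "{k. \<exists>B. clique_minor_model V E k B}"
  have bounded: "k \<le> card V" if k: "k \<in> ?K" for k
  proof -
    obtain B where B: "clique_minor_model V E k B" using k by blast
    show ?thesis
    proof (rule clique_minor_model_card_le[OF B assms])
      fix i assume "i < k"
      then have "B i \<subseteq> V" "B i \<noteq> {}"
        using B by (auto simp: clique_minor_model_def induces_connected_def)
      then show "B i \<inter> V \<noteq> {}" by blast
    qed
  qed
  have "finite ?K" using bounded finite_nat_set_iff_bounded_le by blast
  moreover have "0 \<in> ?K" by (simp add: clique_minor_model_def)
  moreover have "k' \<in> ?K" if "k \<in> ?K" "k' \<le> k" for k k'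
    using that clique_minor_model_mono by blast
  ultimately have "h \<le> Sup ?K \<longleftrightarrow> h \<in> ?K"
    by (intro nat_le_Sup_iff_mem) blast+
  moreover have "hadwiger_number V E = Sup ?K"
    by (simp add: hadwiger_number_def clique_minor_model_def)
  ultimately show ?thesis by simp
qed

lemma induces_connected_singleton: "induces_connected E {v}"
  by (simp add: induces_connected_def)

lemma induces_connected_star:
  assumes "c \<in> S" and spokes: "\<And>u. u \<in> S \<Longrightarrow> u \<noteq> c \<Longrightarrow> E c u \<and> E u c"
  shows "induces_connected E S"
proof -
  let ?R = "\<lambda>x y. x \<in> S \<and> y \<in> S \<and> E x y"
  have "?R\<^sup>*\<^sup>* u c \<and> ?R\<^sup>*\<^sup>* c u" if "u \<in> S" for u
    using spokes[OF that] that \<open>c \<in> S\<close> by (cases "u = c") auto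
  then show ?thesis
    unfolding induces_connected_def using \<open>c \<in> S\<close> by (meson empty_iff rtranclp_trans)
qed

lemma clique_minor_model_of_disjoint_dominating_sets:
  assumes D: "disjoint_dominating_sets {0..<n} E d D"
  shows "\<exists>B. clique_minor_model (G'_verts n d) (G'_edge E) (n * (n + 1) + d) B"
proof -
  let ?h = "n * (n + 1) + d"
  define bot where "bot i = Bot ((i - d) div (n + 1)) ((i - d) mod (n + 1))" for i
  define B where "B i = (if i < d then insert (Top i) (Mid ` D i) else {bot i})" for i
  have dominating: "dominating_set {0..<n} E (D a)" if "a < d" for a
    using D that by (simp add: disjoint_dominating_sets_def)
  then have D_sub: "D a \<subseteq> {0..<n}" if "a < d" for a
    using that unfolding dominating_set_def by blast
  have dominated: "\<exists>p\<in>D a. dominates E p j" if "a < d" "j < n" for a j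
  proof -
    have "j \<in> D a \<or> (\<exists>p\<in>D a. E p j)"
      using dominating[OF that(1)] that(2) unfolding dominating_set_def by simp
    then show ?thesis unfolding dominates_def by blast
  qed
  have bot_in: "bot i \<in> G'_verts n d" if "d \<le> i" "i < ?h" for i
  proof -
    have "(i - d) div (n + 1) < n" using that by (simp add: div_less_iff_less_mult)
    then show ?thesis unfolding bot_def G'_verts_def by auto
  qed
  have bot_inj: "i = i'" if "bot i = bot i'" "d \<le> i" "d \<le> i'" for i i'
  proof -
    have "i - d = i' - d" using that(1) unfolding bot_def by (metis div_mult_mod_eq vtx.inject(3))
    then show ?thesis using that(2,3) by simp
  qed
  have star_to_bot: "\<exists>x\<in>B a. G'_edge E x (bot i) \<and> G'_edge E (bot i) x"
    if a: "a < d" and i: "d \<le> i" "i < ?h" for a i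
  proof -
    have "bot i \<in> G'_verts n d" using bot_in i .
    then obtain p where "p \<in> D a" "dominates E p ((i - d) div (n + 1))"
      using dominated[OF a] unfolding bot_def G'_verts_def by auto
    then show ?thesis using a unfolding B_def bot_def by auto
  qed
  have "B i \<subseteq> G'_verts n d \<and> induces_connected (G'_edge E) (B i)" if "i < ?h" for i
  proof (cases "i < d")
    case True
    then have "induces_connected (G'_edge E) (B i)"
      unfolding B_def by (auto intro: induces_connected_star[of "Top i"])
    then show ?thesis using True D_sub[OF True] unfolding B_def G'_verts_def by auto
  next
    case False
    then show ?thesis
      using bot_in that unfolding B_def by (simp add: induces_connected_singleton)
  qed
  moreover have "B i \<inter> B j = {} \<and> (\<exists>x\<in>B i. \<exists>y\<in>B j. G'_edge E x y)"
    if "i < ?h" "j < ?h" "i \<noteq> j" for i j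
  proof (cases "i < d"; cases "j < d")
    assume "i < d" "j < d"
    then have "D i \<inter> D j = {}" using D that(3) by (simp add: disjoint_dominating_sets_def)
    then show ?thesis using \<open>i < d\<close> \<open>j < d\<close> that(3) unfolding B_def by auto
  next
    assume "i < d" "\<not> j < d"
    then show ?thesis using star_to_bot[of i j] that unfolding B_def bot_def by auto
  next
    assume "\<not> i < d" "j < d"
    then show ?thesis using star_to_bot[of j i] that unfolding B_def bot_def by auto
  next
    assume "\<not> i < d" "\<not> j < d"
    then have "bot i \<noteq> bot j" using bot_inj that(3) by auto
    then show ?thesis using \<open>\<not> i < d\<close> \<open>\<not> j < d\<close> unfolding B_def bot_def by simp
  qed
  ultimately show ?thesis unfolding clique_minor_model_def by blast
qed

definition G'_bottom :: "nat \<Rightarrow> vtx set" where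
  "G'_bottom n = {Bot j k | j k. j < n \<and> k < n + 1}"

lemma G'_verts_eq:
  "G'_verts n d = Top ` {..<d} \<union> Mid ` {..<n} \<union> G'_bottom n"
  unfolding G'_verts_def G'_bottom_def by auto

lemma G'_bottom_eq: "G'_bottom n = (\<lambda>(j, k). Bot j k) ` ({..<n} \<times> {..<n + 1})"
  unfolding G'_bottom_def by auto

lemma card_G'_bottom_le: "card (G'_bottom n) \<le> n * (n + 1)"
  unfolding G'_bottom_eq using card_image_le[of "{..<n} \<times> {..<n + 1}"] by simp

lemma finite_G'_verts: "finite (G'_verts n d)"
  unfolding G'_verts_eq G'_bottom_eq by simp

lemma card_G'_verts_le: "card (G'_verts n d) \<le> d + n + n * (n + 1)"
proof -
  have "card (G'_verts n d) \<le> card (Top ` {..<d}) + card (Mid ` {..<n}) + card (G'_bottom n)"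
    unfolding G'_verts_eq
    using card_Un_le[of "Top ` {..<d} \<union> Mid ` {..<n}" "G'_bottom n"]
      card_Un_le[of "Top ` {..<d}" "Mid ` {..<n}"] by linarith
  then show ?thesis
    using card_image_le[of "{..<d}" Top] card_image_le[of "{..<n}" Mid] card_G'_bottom_le[of n]
    by simp
qed

lemma card_branch_sets_avoiding_G'_bottom:
  assumes model: "clique_minor_model (G'_verts n d) (G'_edge E) (n * (n + 1) + d) B"
  shows "d \<le> card {i. i < n * (n + 1) + d \<and> B i \<inter> G'_bottom n = {}}"
proof -
  let ?h = "n * (n + 1) + d"
  let ?P = "{i. i < ?h \<and> B i \<inter> G'_bottom n = {}}"
  let ?Q = "{i. i < ?h \<and> B i \<inter> G'_bottom n \<noteq> {}}"
  have "card ?Q \<le> card (G'_bottom n)"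
  proof (rule card_le_if_disjoint_family_meets)
    show "finite (G'_bottom n)" by (simp add: G'_bottom_eq)
    show "B i \<inter> B j = {}" if "i \<in> ?Q" "j \<in> ?Q" "i \<noteq> j" for i j
    proof -
      have "i < ?h" "j < ?h" using that(1,2) by simp_all
      then show ?thesis using model that(3) unfolding clique_minor_model_def by blast
    qed
  qed simp
  also have "\<dots> \<le> n * (n + 1)" by (rule card_G'_bottom_le)
  finally have "card ?Q \<le> n * (n + 1)" .
  moreover have "?h \<le> card ?P + card ?Q"
  proof -
    have "{..<?h} = ?P \<union> ?Q" by auto
    then have "card {..<?h} \<le> card ?P + card ?Q" by (simp only: card_Un_le)
    then show ?thesis by simp
  qed
  ultimately show ?thesis by linarith
qed

lemma branch_set_avoiding_G'_bottom_dominates: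
  assumes model: "clique_minor_model (G'_verts n d) (G'_edge E) (n * (n + 1) + d) B"
    and i: "i < n * (n + 1) + d" "B i \<inter> G'_bottom n = {}" and j: "j < n"
  shows "\<exists>p. Mid p \<in> B i \<and> dominates E p j"
proof (rule ccontr)
  assume undominated: "\<nexists>p. Mid p \<in> B i \<and> dominates E p j"
  let ?h = "n * (n + 1) + d"
  let ?column = "Bot j ` {..<n + 1}"
  define S where "S = G'_verts n d - ?column"
  have column_sub: "?column \<subseteq> G'_bottom n" using j unfolding G'_bottom_def by auto
  have "card S = card (G'_verts n d) - (n + 1)"
    using column_sub finite_G'_verts unfolding S_def G'_verts_eq
    by (subst card_Diff_subset) (auto simp: card_image inj_on_def)
  moreover have "0 < n * (n + 1)" using j by simp
  ultimately have card_S: "card S < ?h"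
    using card_G'_verts_le[of n d] by linarith
  have B_sub: "B k \<subseteq> G'_verts n d" "B k \<noteq> {}" if "k < ?h" for k
    using model that unfolding clique_minor_model_def induces_connected_def by auto
  have "B k \<inter> S \<noteq> {}" if k: "k < ?h" for k
  proof (cases "k = i")
    case True
    then show ?thesis using B_sub[OF i(1)] i(2) column_sub unfolding S_def by blast
  next
    case False
    then obtain x y where xy: "x \<in> B i" "y \<in> B k" "G'_edge E x y"
      using model i(1) k unfolding clique_minor_model_def by blast
    have "x \<in> G'_verts n d - G'_bottom n" using xy(1) B_sub[OF i(1)] i(2) by blast
    then have "y \<notin> ?column"
      using xy undominated unfolding G'_verts_eq by auto
    then show ?thesis using xy(2) B_sub[OF k] unfolding S_def by blast
  qed
  then have "?h \<le> card S"
    using model finite_G'_verts unfolding S_def by (intro clique_minor_model_card_le) auto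
  then show False using card_S by simp
qed

lemma disjoint_dominating_sets_of_clique_minor_model:
  assumes model: "clique_minor_model (G'_verts n d) (G'_edge E) (n * (n + 1) + d) B"
  shows "\<exists>D. disjoint_dominating_sets {0..<n} E d D"
proof -
  let ?P = "{i. i < n * (n + 1) + d \<and> B i \<inter> G'_bottom n = {}}"
  obtain f where f: "f ` {..<d} \<subseteq> ?P" "inj_on f {..<d}"
    using card_le_inj[of "{..<d}" ?P] card_branch_sets_avoiding_G'_bottom[OF model] by auto
  define D where "D a = {p. Mid p \<in> B (f a)}" for a
  have "dominating_set {0..<n} E (D a)" if "a < d" for a
  proof -
    have fa: "f a \<in> ?P" using f(1) that by auto
    then have "B (f a) \<subseteq> G'_verts n d"
      using model unfolding clique_minor_model_def by simp
    then have "D a \<subseteq> {0..<n}"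
      unfolding D_def G'_verts_def by auto
    moreover have "j \<in> D a \<or> (\<exists>p\<in>D a. E p j)" if "j < n" for j
      using branch_set_avoiding_G'_bottom_dominates[OF model _ _ that] fa
      unfolding D_def dominates_def by auto
    ultimately show ?thesis unfolding dominating_set_def by simp
  qed
  moreover have "D a \<inter> D b = {}" if "a < d" "b < d" "a \<noteq> b" for a b
  proof -
    have "f a \<noteq> f b" "f a \<in> ?P" "f b \<in> ?P" using f that by (auto dest: inj_onD)
    then have "B (f a) \<inter> B (f b) = {}" using model unfolding clique_minor_model_def by simp
    then show ?thesis unfolding D_def by auto
  qed
  ultimately show ?thesis unfolding disjoint_dominating_sets_def by blast
qed

theorem lemma6:
  fixes E :: "nat \<Rightarrow> nat \<Rightarrow> bool" and n d :: nat
  assumes "simple_graph {0..<n} E"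
    and "n \<ge> 1"
    and "\<forall>i<n. \<exists>j<n. j \<noteq> i \<and> \<not> E i j"
    and "d \<ge> 1"
  shows "domatic_number {0..<n} E \<ge> d \<longleftrightarrow>
         hadwiger_number (G'_verts n d) (G'_edge E) \<ge> n * (n + 1) + d"
proof -
  have "domatic_number {0..<n} E \<ge> d \<longleftrightarrow> (\<exists>D. disjoint_dominating_sets {0..<n} E d D)"
    using \<open>n \<ge> 1\<close> by (intro domatic_number_ge_iff) auto
  also have "\<dots> \<longleftrightarrow> (\<exists>B. clique_minor_model (G'_verts n d) (G'_edge E) (n * (n + 1) + d) B)"
    using clique_minor_model_of_disjoint_dominating_sets
      disjoint_dominating_sets_of_clique_minor_model by blast
  also have "\<dots> \<longleftrightarrow> hadwiger_number (G'_verts n d) (G'_edge E) \<ge> n * (n + 1) + d"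
    using finite_G'_verts by (intro hadwiger_number_ge_iff[symmetric])
  finally show ?thesis .
qed

end
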